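(* Let $S$ be a $d\times d$ symmetric positive semidefinite matrix with $S_{ii}>0$ for all $i$. For any $\rho>0$, the graphical lasso problem of minimizing $-\log\det K+\operatorname{tr}(SK)+\rho\sum_{i\ne j}|K_{ij}|$ over positive definite $K$ has an optimum, and it is unique. More generally, for symmetric $L,U$ with entries in $\mathbb{R}\cup\{\pm\infty\}$, $L_{ii}=U_{ii}=0$ and $L_{ij}<0<U_{ij}$ for all $i\ne j$, the problem of minimizing $-\log\det K+\operatorname{tr}(SK)+\sum_{i\neq j}\max\{L_{ij}K_{ij},U_{ij}K_{ij}\}$ over positive definite $K$ (convention $\pm\infty\cdot0=0$) has a unique optimum. *)

theory Defs
  imports "HOL-Analysis.Analysis" "HOL-Library.Extended_Real"
begin

definition sym_mat :: "('a::zero) ^'n^'n \<Rightarrow> bool" where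
  "sym_mat A \<longleftrightarrow> transpose A = A"

definition psd_mat :: "real^'n^'n \<Rightarrow> bool" where
  "psd_mat A \<longleftrightarrow> sym_mat A \<and> (\<forall>x. 0 \<le> x \<bullet> (A *v x))"

definition pd_mat :: "real^'n^'n \<Rightarrow> bool" where
  "pd_mat A \<longleftrightarrow> sym_mat A \<and> (\<forall>x. x \<noteq> 0 \<longrightarrow> 0 < x \<bullet> (A *v x))"

definition glasso_obj :: "real^'n^'n \<Rightarrow> real \<Rightarrow> real^'n^'n \<Rightarrow> real" where
  "glasso_obj S \<rho> K = - ln (det K) + trace (S ** K)
     + \<rho> * (\<Sum>i\<in>UNIV. \<Sum>j\<in>UNIV - {i}. \<bar>K $ i $ j\<bar>)"

text \<open>Generalized objective with extended-real box penalty (ereal: \<open>\<infinity> * 0 = 0\<close>).\<close>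
definition box_obj :: "real^'n^'n \<Rightarrow> ereal^'n^'n \<Rightarrow> ereal^'n^'n \<Rightarrow> real^'n^'n \<Rightarrow> ereal" where
  "box_obj S L U K = ereal (- ln (det K) + trace (S ** K))
     + (\<Sum>i\<in>UNIV. \<Sum>j\<in>UNIV - {i}.
          max (L $ i $ j * ereal (K $ i $ j)) (U $ i $ j * ereal (K $ i $ j)))"

end

theory Submission
  imports Defs
begin

(* The objective is strictly convex on the positive definite cone: the penalty is convex and
   ln det is strictly concave, which after a simultaneous diagonalisation of two positive definite
   matrices reduces to the strict concavity of ln.  Hence there is at most one minimiser.
   For existence, the positive diagonal of S gives a constant l > 0 with
   tr(S K) + penalty(K) >= l tr K on the feasible positive semidefinite matrices.  Since
   -ln det K + (l/2) tr K is bounded below, a sublevel set has bounded trace and determinant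
   bounded away from 0; it is therefore a compact set of positive definite matrices, on which the
   continuous objective attains its minimum.  An infinite bound L_ij = -oo (U_ij = +oo) only
   restricts K_ij to a closed half-line, on which the penalty is finite, convex and continuous;
   the graphical lasso is the special case L_ij = -rho, U_ij = rho. *)

section \<open>Symmetric matrices and the spectral theorem\<close>

lemma sym_mat_iff_nth: "sym_mat (A :: 'a::zero^'n^'n) \<longleftrightarrow> (\<forall>i j. A$j$i = A$i$j)"
  by (auto simp: sym_mat_def vec_eq_iff transpose_def)

lemma sym_mat_inner_commute:
  fixes A :: "real^'n^'n"
  assumes "sym_mat A"
  shows "(A *v x) \<bullet> y = x \<bullet> (A *v y)"
  using assms by (metis dot_lmul_matrix sym_mat_def vector_transpose_matrix)

lemma sym_mat_congruence:
  fixes R B :: "real^'n^'n"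
  assumes "sym_mat B"
  shows "sym_mat (R ** B ** transpose R)"
  using assms by (simp add: sym_mat_def matrix_transpose_mul matrix_mul_assoc)

lemma inner_congruence:
  fixes R M :: "real^'n^'n"
  shows "x \<bullet> ((R ** M ** transpose R) *v x) = (transpose R *v x) \<bullet> (M *v (transpose R *v x))"
  by (simp add: matrix_vector_mul_assoc[symmetric] dot_lmul_matrix)

lemma matrix_mul_transpose_nth:
  fixes X A Y :: "real^'n^'n"
  shows "(X ** A ** transpose Y)$i$j = X$i \<bullet> (A *v Y$j)"
proof -
  have "(X ** A ** transpose Y)$i$j = (\<Sum>k\<in>UNIV. \<Sum>l\<in>UNIV. X$i$l * (A$l$k * Y$j$k))"
    by (simp add: matrix_matrix_mult_def transpose_def sum_distrib_right mult.assoc)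
  also have "\<dots> = X$i \<bullet> (A *v Y$j)"
    by (subst sum.swap) (simp add: inner_vec_def matrix_vector_mult_def sum_distrib_left)
  finally show ?thesis .
qed

lemma matrix_nth_eq_inner: "(K::real^'n^'n)$i$j = (mat 1::real^'n^'n)$i \<bullet> (K *v (mat 1::real^'n^'n)$j)"
  using matrix_mul_transpose_nth[of "mat 1" K "mat 1" i j] by simp

lemma zero_if_linear_le_quadratic:
  fixes a b :: real
  assumes "\<And>t. 2 * t * a \<le> t\<^sup>2 * b"
  shows "a = 0"
proof (rule ccontr)
  assume "a \<noteq> 0"
  define s where "s = 1 / (\<bar>b\<bar> + 1)"
  have "s > 0" by (simp add: s_def)
  have "a\<^sup>2 * (2 * s) \<le> a\<^sup>2 * (s\<^sup>2 * b)"
    using assms[of "s * a"] by (simp add: algebra_simps power2_eq_square)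
  moreover have "0 < a\<^sup>2" using \<open>a \<noteq> 0\<close> by simp
  ultimately have "2 * s \<le> s\<^sup>2 * b" by (simp only: mult_le_cancel_left_pos)
  hence "s * 2 \<le> s * (s * b)" by (simp add: power2_eq_square ac_simps)
  with \<open>s > 0\<close> have "2 \<le> s * b" by simp
  moreover have "s * b < 1" using \<open>s > 0\<close> by (simp add: s_def field_simps)
  ultimately show False by simp
qed

lemma continuous_on_quadratic_form: "continuous_on S (\<lambda>x::real^'n. x \<bullet> (A *v x))"
  by (intro continuous_intros linear_continuous_on matrix_vector_mul_bounded_linear)

lemma sym_mat_unit_eigenvector_in_invariant_subspace:
  fixes A :: "real^'n^'n"
  assumes symA: "sym_mat A" and V: "subspace V" "V \<noteq> {0}" and invV: "\<And>x. x \<in> V \<Longrightarrow> A *v x \<in> V"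
  obtains v l where "v \<in> V" "norm v = 1" "A *v v = l *\<^sub>R v"
proof -
  let ?S = "V \<inter> sphere 0 1"
  obtain u where u: "u \<in> V" "u \<noteq> 0" using V subspace_0 by blast
  have "(1 / norm u) *\<^sub>R u \<in> ?S" using u V(1) by (simp add: subspace_scale)
  hence "?S \<noteq> {}" by blast
  moreover have "compact ?S" by (intro closed_Int_compact closed_subspace V(1) compact_sphere)
  ultimately obtain v where v: "v \<in> ?S" and vmax: "\<And>y. y \<in> ?S \<Longrightarrow> y \<bullet> (A *v y) \<le> v \<bullet> (A *v v)"
    using continuous_attains_sup[OF _ _ continuous_on_quadratic_form] by metis
  define l where "l = v \<bullet> (A *v v)"
  have vV: "v \<in> V" and vv: "v \<bullet> v = 1" using v by (auto simp: norm_eq_1)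
  have quad_le: "x \<bullet> (A *v x) \<le> l * (x \<bullet> x)" if "x \<in> V" for x
  proof (cases "x = 0")
    case False
    have "(1 / norm x) *\<^sub>R x \<in> ?S" using that False V(1) by (simp add: subspace_scale)
    hence "((1 / norm x) *\<^sub>R x) \<bullet> (A *v ((1 / norm x) *\<^sub>R x)) \<le> l" using vmax l_def by blast
    hence "(x \<bullet> (A *v x)) / (norm x)\<^sup>2 \<le> l"
      by (simp add: matrix_vector_mult_scaleR power2_eq_square)
    thus ?thesis using False by (simp add: divide_le_eq power2_norm_eq_inner)
  qed simp
  \<comment> \<open>\<open>v\<close> maximises the Rayleigh quotient on \<open>V\<close>, so the first variation
    in any direction \<open>w \<bottom> v\<close> vanishes\<close>
  have orth: "w \<bullet> (A *v v) = 0" if "w \<in> V" "v \<bullet> w = 0" for w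
  proof (rule zero_if_linear_le_quadratic[where b = "l * (w \<bullet> w) - w \<bullet> (A *v w)"])
    fix t :: real
    have quad: "(v + t *\<^sub>R w) \<bullet> (A *v (v + t *\<^sub>R w)) = l + 2 * t * (w \<bullet> (A *v v)) + t\<^sup>2 * (w \<bullet> (A *v w))"
      using sym_mat_inner_commute[OF symA, of w v] inner_commute[of "A *v w" v]
      by (simp add: l_def matrix_vector_right_distrib matrix_vector_mult_scaleR inner_add_left
          inner_add_right power2_eq_square algebra_simps)
    have sq: "(v + t *\<^sub>R w) \<bullet> (v + t *\<^sub>R w) = 1 + t\<^sup>2 * (w \<bullet> w)"
      using vv that(2) by (simp add: inner_add_left inner_add_right inner_commute power2_eq_square)
    have "(v + t *\<^sub>R w) \<bullet> (A *v (v + t *\<^sub>R w)) \<le> l * ((v + t *\<^sub>R w) \<bullet> (v + t *\<^sub>R w))"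
      using vV that V(1) by (intro quad_le) (simp add: subspace_add subspace_scale)
    thus "2 * t * (w \<bullet> (A *v v)) \<le> t\<^sup>2 * (l * (w \<bullet> w) - w \<bullet> (A *v w))"
      unfolding quad sq by (simp add: algebra_simps)
  qed
  define z where "z = A *v v - l *\<^sub>R v"
  have "z \<in> V" using invV[OF vV] vV V(1) by (simp add: z_def subspace_diff subspace_scale)
  moreover have "v \<bullet> z = 0" using vv by (simp add: z_def l_def inner_diff_right)
  ultimately have "z \<bullet> (A *v v) = 0" by (rule orth)
  hence "z \<bullet> z = 0" using \<open>v \<bullet> z = 0\<close> by (simp add: z_def inner_diff_right inner_commute)
  hence "A *v v = l *\<^sub>R v" by (simp add: z_def)
  with that vV v show ?thesis by auto
qed

lemma sym_mat_orthonormal_eigenvectors: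
  fixes A :: "real^'n^'n"
  assumes symA: "sym_mat A" and "subspace V" and "\<And>x. x \<in> V \<Longrightarrow> A *v x \<in> V"
  shows "\<exists>B\<subseteq>V. finite B \<and> card B = dim V \<and> pairwise orthogonal B
           \<and> (\<forall>b\<in>B. norm b = 1 \<and> (\<exists>l. A *v b = l *\<^sub>R b))"
  using assms(2,3)
proof (induction "dim V" arbitrary: V)
  case 0
  then show ?case by (intro exI[of _ "{}"]) auto
next
  case (Suc k)
  have "V \<noteq> {0}" using Suc.hyps(2) by auto
  then obtain v l where v: "v \<in> V" "norm v = 1" "A *v v = l *\<^sub>R v"
    using sym_mat_unit_eigenvector_in_invariant_subspace[OF symA Suc.prems(1) _ Suc.prems(2)] by blast
  define V' where "V' = {w \<in> V. \<forall>x \<in> span {v}. orthogonal x w}"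
  have V'_iff: "w \<in> V' \<longleftrightarrow> w \<in> V \<and> v \<bullet> w = 0" for w
    unfolding V'_def by (auto simp: span_singleton orthogonal_def)
  have "subspace V'"
    using Suc.prems(1) V'_iff unfolding subspace_def by (auto simp: inner_add_right)
  moreover have "A *v x \<in> V'" if "x \<in> V'" for x
  proof -
    have "v \<bullet> (A *v x) = (A *v v) \<bullet> x" using sym_mat_inner_commute[OF symA, of v x] by simp
    thus ?thesis using that v(3) Suc.prems(2) unfolding V'_iff by (simp add: inner_commute)
  qed
  moreover have dim_V': "k = dim V'"
  proof -
    have "dim V' + dim (span {v}) = dim V"
      unfolding V'_def
      by (rule dim_subspace_orthogonal_to_vectors) (use v(1) Suc.prems(1) in \<open>auto simp: span_minimal\<close>)
    moreover have "v \<noteq> 0" using \<open>norm v = 1\<close> by auto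
    ultimately show ?thesis using Suc.hyps(2) by (simp add: dim_span dim_singleton)
  qed
  ultimately obtain B where B: "B \<subseteq> V'" "finite B" "card B = dim V'" "pairwise orthogonal B"
    "\<forall>b\<in>B. norm b = 1 \<and> (\<exists>l. A *v b = l *\<^sub>R b)"
    using Suc.hyps(1) by blast
  have "v \<notin> B" using B(1) v(2) V'_iff by (auto simp: norm_eq_1)
  show ?case
  proof (intro exI[of _ "insert v B"] conjI)
    show "insert v B \<subseteq> V" using B(1) v(1) V'_iff by auto
    show "card (insert v B) = dim V" using B(2,3) \<open>v \<notin> B\<close> dim_V' Suc.hyps(2) by simp
    have "orthogonal v b" if "b \<in> B" for b
      using that B(1) V'_iff by (auto simp: orthogonal_def)
    then show "pairwise orthogonal (insert v B)"
      using B(4) by (simp add: pairwise_insert) (meson orthogonal_commute)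
    show "finite (insert v B)" using B(2) by simp
    show "\<forall>b\<in>insert v B. norm b = 1 \<and> (\<exists>l. A *v b = l *\<^sub>R b)" using B(5) v by blast
  qed
qed

definition diag_mat :: "real^'n \<Rightarrow> real^'n^'n" where
  "diag_mat d = (\<chi> i j. if i = j then d$i else 0)"

lemma sym_mat_diagonalization:
  fixes A :: "real^'n^'n"
  assumes "sym_mat A"
  obtains P d where "orthogonal_matrix P" "P ** A ** transpose P = diag_mat d"
proof -
  obtain B where B: "finite B" "card B = CARD('n)" "pairwise orthogonal B"
    "\<forall>b\<in>B. norm b = 1 \<and> (\<exists>l. A *v b = l *\<^sub>R b)"
    using sym_mat_orthonormal_eigenvectors[OF assms subspace_UNIV] by auto
  obtain f where f: "bij_betw f (UNIV::'n set) B"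
    using B(1,2) bij_betw_iff_card[of "UNIV::'n set" B] by auto
  hence fB: "f i \<in> B" and f_inj: "f i = f j \<Longrightarrow> i = j" for i j
    by (auto simp: bij_betw_def inj_on_def)
  have "\<forall>i. \<exists>l. A *v f i = l *\<^sub>R f i" using B(4) fB by blast
  then obtain l where l: "A *v f i = l i *\<^sub>R f i" for i by (metis choice)
  define P :: "real^'n^'n" where "P = (\<chi> i. f i)"
  have orth: "f i \<bullet> f j = (if i = j then 1 else 0)" for i j
    using B(3,4) fB[of i] fB[of j] f_inj[of i j]
    by (auto simp: pairwise_def orthogonal_def norm_eq_1)
  have "orthogonal_matrix P"
    unfolding orthogonal_matrix_orthonormal_rows using orth
    by (simp add: P_def row_def norm_eq_1 orthogonal_def vec_lambda_eta)
  moreover have "P ** A ** transpose P = diag_mat (\<chi> i. l i)"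
    by (simp add: vec_eq_iff matrix_mul_transpose_nth P_def diag_mat_def l orth)
  ultimately show ?thesis using that by blast
qed

lemma det_diag_mat: "det (diag_mat d) = (\<Prod>i\<in>UNIV. d$i)"
  by (subst det_diagonal) (auto simp: diag_mat_def)

lemma trace_diag_mat: "trace (diag_mat d) = (\<Sum>i\<in>UNIV. d$i)"
  by (simp add: trace_def diag_mat_def)

lemma transpose_diag_mat: "transpose (diag_mat d) = diag_mat d"
  by (simp add: vec_eq_iff transpose_def diag_mat_def)

lemma diag_mat_mult: "diag_mat a ** diag_mat b = diag_mat (\<chi> i. a$i * b$i)"
  unfolding vec_eq_iff matrix_matrix_mult_def diag_mat_def
  by (simp add: if_distrib [of "\<lambda>x. x * _"] cong: if_cong)

lemma diagonalization_eigenvalue: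
  fixes P A :: "real^'n^'n"
  assumes "P ** A ** transpose P = diag_mat d"
  shows "d$i = P$i \<bullet> (A *v P$i)"
  using arg_cong[OF assms, of "\<lambda>M. M$i$i"] by (simp add: matrix_mul_transpose_nth diag_mat_def)

lemma orthogonal_matrix_row_nonzero:
  fixes P :: "real^'n^'n"
  assumes "orthogonal_matrix P"
  shows "P$i \<noteq> 0"
  using assms unfolding orthogonal_matrix_orthonormal_rows by (metis norm_zero row_def vec_lambda_eta zero_neq_one)

lemma det_congruence:
  fixes T A :: "real^'n^'n"
  shows "det (T ** A ** transpose T) = (det T)\<^sup>2 * det A"
  by (simp add: det_mul power2_eq_square)

lemma det_eq_prod_eigenvalues:
  fixes P A :: "real^'n^'n"
  assumes "orthogonal_matrix P" "P ** A ** transpose P = diag_mat d"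
  shows "det A = (\<Prod>i\<in>UNIV. d$i)"
proof -
  have "(det P)\<^sup>2 = 1" using det_orthogonal_matrix[OF assms(1)] by auto
  thus ?thesis using det_congruence[of P A] by (simp add: assms(2) det_diag_mat)
qed

lemma trace_eq_sum_eigenvalues:
  fixes P A :: "real^'n^'n"
  assumes "orthogonal_matrix P" "P ** A ** transpose P = diag_mat d"
  shows "trace A = (\<Sum>i\<in>UNIV. d$i)"
proof -
  have "trace (P ** A ** transpose P) = trace (transpose P ** (P ** A))"
    by (rule trace_mul_sym)
  also have "\<dots> = trace A"
    using assms(1) by (simp add: matrix_mul_assoc orthogonal_matrix_def)
  finally show ?thesis using assms(2) by (simp add: trace_diag_mat)
qed

section \<open>Positive semidefinite matrices\<close>

lemma psd_mat_diagonalization: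
  fixes A :: "real^'n^'n"
  assumes "psd_mat A"
  obtains P d where "orthogonal_matrix P" "P ** A ** transpose P = diag_mat d" "\<And>i. 0 \<le> d$i"
proof -
  obtain P d where P: "orthogonal_matrix P" "P ** A ** transpose P = diag_mat d"
    using sym_mat_diagonalization assms unfolding psd_mat_def by blast
  moreover have "0 \<le> d$i" for i
    using assms diagonalization_eigenvalue[OF P(2)] unfolding psd_mat_def by simp
  ultimately show ?thesis using that by blast
qed

lemma pd_mat_diagonalization:
  fixes A :: "real^'n^'n"
  assumes "pd_mat A"
  obtains P d where "orthogonal_matrix P" "P ** A ** transpose P = diag_mat d" "\<And>i. 0 < d$i"
proof -
  obtain P d where P: "orthogonal_matrix P" "P ** A ** transpose P = diag_mat d"
    using sym_mat_diagonalization assms unfolding pd_mat_def by blast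
  moreover have "0 < d$i" for i
    using assms diagonalization_eigenvalue[OF P(2)] orthogonal_matrix_row_nonzero[OF P(1)]
    unfolding pd_mat_def by simp
  ultimately show ?thesis using that by blast
qed

lemma pd_imp_psd_mat: "pd_mat K \<Longrightarrow> psd_mat K"
  unfolding pd_mat_def psd_mat_def by (metis inner_zero_left order.refl order.strict_implies_order)

lemma pd_mat_det_pos:
  fixes K :: "real^'n^'n"
  assumes "pd_mat K"
  shows "0 < det K"
proof -
  obtain P d where "orthogonal_matrix P" "P ** K ** transpose P = diag_mat d" "\<And>i. 0 < d$i"
    using pd_mat_diagonalization[OF assms] by blast
  thus ?thesis by (simp add: det_eq_prod_eigenvalues prod_pos)
qed

lemma pd_mat_mat_1: "pd_mat (mat 1 :: real^'n^'n)"
  unfolding pd_mat_def sym_mat_def by simp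

lemma pd_mat_midpoint:
  fixes A B :: "real^'n^'n"
  assumes "pd_mat A" "pd_mat B"
  shows "pd_mat ((1/2) *\<^sub>R (A + B))"
  unfolding pd_mat_def
proof (intro conjI allI impI)
  show "sym_mat ((1/2) *\<^sub>R (A + B))"
    using assms unfolding pd_mat_def sym_mat_iff_nth by simp
  fix x :: "real^'n" assume "x \<noteq> 0"
  have "((1/2) *\<^sub>R (A + B)) *v x = (1/2) *\<^sub>R (A *v x + B *v x)"
    by (simp add: scaleR_matrix_vector_assoc[symmetric] matrix_vector_mult_add_rdistrib)
  with assms \<open>x \<noteq> 0\<close> show "0 < x \<bullet> (((1/2) *\<^sub>R (A + B)) *v x)"
    unfolding pd_mat_def by (simp add: inner_add_right add_pos_pos)
qed

lemma psd_mat_diag_nonneg: "psd_mat K \<Longrightarrow> 0 \<le> K$i$i"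
  unfolding psd_mat_def by (subst matrix_nth_eq_inner) blast

lemma psd_mat_trace_nonneg: "psd_mat K \<Longrightarrow> 0 \<le> trace K"
  unfolding trace_def by (intro sum_nonneg) (simp add: psd_mat_diag_nonneg)

lemma psd_mat_abs_nth_le_trace:
  fixes K :: "real^'n^'n"
  assumes psd: "psd_mat K"
  shows "\<bar>K$i$j\<bar> \<le> trace K"
proof (cases "i = j")
  case True
  have "K$i$i \<le> trace K"
    unfolding trace_def using psd_mat_diag_nonneg[OF psd] by (intro member_le_sum) auto
  thus ?thesis using True psd_mat_diag_nonneg[OF psd, of i] by simp
next
  case False
  define u where "u = (mat 1::real^'n^'n)$i"
  define v where "v = (mat 1::real^'n^'n)$j"
  have "K$j$i = K$i$j" using psd unfolding psd_mat_def sym_mat_iff_nth by blast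
  hence quad: "(u + s *\<^sub>R v) \<bullet> (K *v (u + s *\<^sub>R v)) = K$i$i + 2 * s * K$i$j + s\<^sup>2 * K$j$j" for s
    unfolding u_def v_def
    by (simp add: matrix_vector_right_distrib matrix_vector_mult_scaleR inner_add_left
        inner_add_right power2_eq_square algebra_simps flip: matrix_nth_eq_inner)
  have "0 \<le> K$i$i + 2 * s * K$i$j + s\<^sup>2 * K$j$j" for s
    using psd unfolding psd_mat_def quad[symmetric] by blast
  from this[of 1] this[of "-1"] have "\<bar>K$i$j\<bar> \<le> K$i$i + K$j$j"
    using psd_mat_diag_nonneg[OF psd, of i] psd_mat_diag_nonneg[OF psd, of j] by simp
  also have "\<dots> = (\<Sum>k\<in>{i,j}. K$k$k)" using False by simp
  also have "\<dots> \<le> trace K"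
    unfolding trace_def using psd_mat_diag_nonneg[OF psd] by (intro sum_mono2) auto
  finally show ?thesis .
qed

lemma diagonalization_inverse:
  fixes P A :: "real^'n^'n"
  assumes "orthogonal_matrix P" "P ** A ** transpose P = diag_mat d"
  shows "A = transpose P ** diag_mat d ** P"
proof -
  have "transpose P ** (P ** A ** transpose P) ** P = (transpose P ** P) ** A ** (transpose P ** P)"
    by (simp add: matrix_mul_assoc)
  thus ?thesis using assms by (simp add: orthogonal_matrix_def)
qed

lemma trace_mult_diag_mat: "trace (Y ** diag_mat d) = (\<Sum>i\<in>UNIV. Y$i$i * d$i)"
proof -
  have "(\<Sum>k\<in>UNIV. Y$i$k * diag_mat d$k$i) = Y$i$i * d$i" for i
    by (simp add: diag_mat_def if_distrib cong: if_cong)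
  thus ?thesis by (simp add: trace_def matrix_matrix_mult_def)
qed

lemma trace_mult_psd_nonneg:
  fixes X K :: "real^'n^'n"
  assumes "psd_mat X" "psd_mat K"
  shows "0 \<le> trace (X ** K)"
proof -
  obtain P d where P: "orthogonal_matrix P" "P ** K ** transpose P = diag_mat d" "\<And>i. 0 \<le> d$i"
    using psd_mat_diagonalization[OF assms(2)] by blast
  have "trace (X ** K) = trace ((X ** transpose P ** diag_mat d) ** P)"
    by (subst diagonalization_inverse[OF P(1,2)]) (simp add: matrix_mul_assoc)
  also have "\<dots> = trace ((P ** X ** transpose P) ** diag_mat d)"
    by (subst trace_mul_sym) (simp add: matrix_mul_assoc)
  also have "\<dots> = (\<Sum>i\<in>UNIV. (P$i \<bullet> (X *v P$i)) * d$i)"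
    by (simp add: trace_mult_diag_mat matrix_mul_transpose_nth)
  also have "\<dots> \<ge> 0"
    using assms(1) P(3) unfolding psd_mat_def by (intro sum_nonneg mult_nonneg_nonneg) auto
  finally show ?thesis .
qed

lemma closed_psd_mat: "closed {K::real^'n^'n. psd_mat K}"
proof -
  have quad: "x \<bullet> (K *v x) = (\<Sum>i\<in>UNIV. \<Sum>j\<in>UNIV. x$i * (K$i$j * x$j))" for x and K :: "real^'n^'n"
    by (simp add: inner_vec_def matrix_vector_mult_def sum_distrib_left)
  have "{K::real^'n^'n. psd_mat K} = {K. \<forall>i j. K$j$i = K$i$j} \<inter> (\<Inter>x. {K. 0 \<le> x \<bullet> (K *v x)})"
    unfolding psd_mat_def sym_mat_iff_nth by auto
  also have "closed \<dots>"
    unfolding quad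
    by (intro closed_Int closed_INT ballI closed_Collect_all closed_Collect_eq closed_Collect_le
        continuous_intros)
  finally show ?thesis .
qed

lemma psd_mat_det_nonzero_imp_pd:
  fixes K :: "real^'n^'n"
  assumes psd: "psd_mat K" and det: "det K \<noteq> 0"
  shows "pd_mat K"
  unfolding pd_mat_def
proof (intro conjI allI impI)
  show symK: "sym_mat K" using psd psd_mat_def by blast
  fix x :: "real^'n" assume "x \<noteq> 0"
  show "0 < x \<bullet> (K *v x)"
  proof (rule ccontr)
    assume "\<not> ?thesis"
    hence x0: "x \<bullet> (K *v x) = 0" using psd unfolding psd_mat_def by (meson not_less order_antisym)
    \<comment> \<open>\<open>x\<close> minimises the quadratic form, so its first variation \<open>2 y \<bullet> K x\<close> vanishes\<close>
    have "- (y \<bullet> (K *v x)) = 0" for y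
    proof (rule zero_if_linear_le_quadratic[where b = "y \<bullet> (K *v y)"])
      fix t :: real
      have "0 \<le> (x + t *\<^sub>R y) \<bullet> (K *v (x + t *\<^sub>R y))" using psd unfolding psd_mat_def by blast
      also have "\<dots> = 2 * t * (y \<bullet> (K *v x)) + t\<^sup>2 * (y \<bullet> (K *v y))"
        using x0 sym_mat_inner_commute[OF symK, of y x] inner_commute[of "K *v y" x]
        by (simp add: matrix_vector_right_distrib matrix_vector_mult_scaleR inner_add_left
            inner_add_right power2_eq_square algebra_simps)
      finally show "2 * t * (- (y \<bullet> (K *v x))) \<le> t\<^sup>2 * (y \<bullet> (K *v y))" by simp
    qed
    from this[of "K *v x"] have "K *v x = 0" by simp
    moreover have "inj ((*v) K)" using det invertible_det_nz inj_matrix_vector_mult by blast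
    ultimately show False using \<open>x \<noteq> 0\<close> by (metis inj_eq matrix_vector_mult_0_right)
  qed
qed

section \<open>The log-determinant\<close>

lemma neg_ln_det_add_trace_ge:
  fixes K :: "real^'n^'n"
  assumes "pd_mat K" "0 < \<mu>"
  shows "real CARD('n) * (1 + ln \<mu>) \<le> - ln (det K) + \<mu> * trace K"
proof -
  obtain P d where P: "orthogonal_matrix P" "P ** K ** transpose P = diag_mat d" "\<And>i. 0 < d$i"
    using pd_mat_diagonalization[OF assms(1)] by blast
  have "- ln (det K) + \<mu> * trace K = (\<Sum>i\<in>UNIV. - ln (d$i) + \<mu> * d$i)"
    using P by (simp add: det_eq_prod_eigenvalues trace_eq_sum_eigenvalues ln_prod
        sum.distrib sum_negf sum_subtractf sum_distrib_left less_imp_neq[symmetric])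
  also have "\<dots> \<ge> (\<Sum>i\<in>(UNIV::'n set). 1 + ln \<mu>)"
  proof (rule sum_mono)
    fix i
    have "ln (\<mu> * d$i) \<le> \<mu> * d$i - 1" using assms(2) P(3)[of i] by (intro ln_le_minus_one) simp
    thus "1 + ln \<mu> \<le> - ln (d$i) + \<mu> * d$i" using assms(2) P(3)[of i] by (simp add: ln_mult)
  qed
  finally show ?thesis by simp
qed

lemma ln_lt_ln_midpoint:
  fixes m :: real
  assumes "0 < m" "m \<noteq> 1"
  shows "ln m / 2 < ln ((1 + m) / 2)"
proof -
  have "((1 + m) / 2)\<^sup>2 = m + ((m - 1) / 2)\<^sup>2" by (simp add: power2_eq_square field_simps)
  hence "m < ((1 + m) / 2)\<^sup>2" using assms(2) by simp
  hence "ln m < ln (((1 + m) / 2)\<^sup>2)" using assms(1) by simp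
  thus ?thesis using assms(1) by (simp add: ln_realpow)
qed

lemma ln_le_ln_midpoint: "0 < (m::real) \<Longrightarrow> ln m / 2 \<le> ln ((1 + m) / 2)"
  using ln_lt_ln_midpoint[of m] by (cases "m = 1") auto

lemma pd_mat_congruence:
  fixes R B :: "real^'n^'n"
  assumes "pd_mat B" "invertible R"
  shows "pd_mat (R ** B ** transpose R)"
  unfolding pd_mat_def
proof (intro conjI allI impI)
  show "sym_mat (R ** B ** transpose R)"
    using assms(1) unfolding pd_mat_def by (simp add: sym_mat_congruence)
  fix x :: "real^'n" assume "x \<noteq> 0"
  have "inj ((*v) (transpose R))"
    using assms(2) by (intro inj_matrix_vector_mult) (simp add: invertible_det_nz)
  hence "transpose R *v x \<noteq> 0" using \<open>x \<noteq> 0\<close> by (metis injD matrix_vector_mult_0_right)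
  thus "0 < x \<bullet> ((R ** B ** transpose R) *v x)"
    using assms(1) unfolding pd_mat_def inner_congruence by blast
qed

lemma pd_mat_simultaneous_diagonalization:
  fixes A B :: "real^'n^'n"
  assumes "pd_mat A" "pd_mat B"
  obtains T :: "real^'n^'n" and m where "invertible T" "T ** A ** transpose T = mat 1"
    "T ** B ** transpose T = diag_mat m" "\<And>i. 0 < m$i"
proof -
  obtain Q a where Q: "orthogonal_matrix Q" "Q ** A ** transpose Q = diag_mat a" "\<And>i. 0 < a$i"
    using pd_mat_diagonalization[OF assms(1)] by blast
  define R where "R = diag_mat (\<chi> i. 1 / sqrt (a$i)) ** Q"
  have RA: "R ** A ** transpose R = mat 1"
  proof -
    have "R ** A ** transpose R = diag_mat (\<chi> i. 1 / sqrt (a$i)) ** diag_mat a ** diag_mat (\<chi> i. 1 / sqrt (a$i))"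
      by (simp add: R_def matrix_transpose_mul transpose_diag_mat matrix_mul_assoc flip: Q(2))
    also have "\<dots> = mat 1"
    proof -
      have "1 / sqrt (a$i) * a$i * (1 / sqrt (a$i)) = 1" for i
        using Q(3)[of i] by (simp add: field_simps)
      thus ?thesis by (simp add: diag_mat_mult) (simp add: diag_mat_def mat_def vec_eq_iff)
    qed
    finally show ?thesis .
  qed
  have invR: "invertible R"
    using arg_cong[OF RA, of det] by (auto simp: det_congruence invertible_det_nz)
  obtain P m where P: "orthogonal_matrix P" "P ** (R ** B ** transpose R) ** transpose P = diag_mat m"
    "\<And>i. 0 < m$i"
    using pd_mat_diagonalization[OF pd_mat_congruence[OF assms(2) invR]] by blast
  show ?thesis
  proof (rule that[of "P ** R" m])
    show "invertible (P ** R)"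
      using invR P(1) by (intro invertible_mult) (auto simp: invertible_def orthogonal_matrix_def)
    have "P ** R ** A ** transpose (P ** R) = P ** (R ** A ** transpose R) ** transpose P"
      by (simp add: matrix_transpose_mul matrix_mul_assoc)
    thus "P ** R ** A ** transpose (P ** R) = mat 1"
      using RA P(1) by (simp add: orthogonal_matrix_def)
    show "P ** R ** B ** transpose (P ** R) = diag_mat m"
      using P(2) by (simp add: matrix_transpose_mul matrix_mul_assoc)
  qed (use P(3) in simp)
qed

lemma congruence_cancel:
  fixes T A B :: "real^'n^'n"
  assumes "invertible T" "T ** A ** transpose T = T ** B ** transpose T"
  shows "A = B"
proof -
  obtain T' where T': "T' ** T = mat 1" using assms(1) invertible_left_inverse by blast
  hence T'_tr: "transpose T ** transpose T' = mat 1" by (metis matrix_transpose_mul transpose_mat)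
  have undo: "T' ** (T ** X ** transpose T) ** transpose T' = X" for X :: "real^'n^'n"
    by (simp add: matrix_mul_assoc[symmetric] T'_tr) (simp add: matrix_mul_assoc T')
  have "A = T' ** (T ** A ** transpose T) ** transpose T'" by (rule undo[symmetric])
  also have "\<dots> = T' ** (T ** B ** transpose T) ** transpose T'" by (simp only: assms(2))
  also have "\<dots> = B" by (rule undo)
  finally show ?thesis .
qed

lemma congruence_midpoint:
  fixes T A B :: "real^'n^'n"
  shows "T ** ((1/2) *\<^sub>R (A + B)) ** transpose T = (1/2) *\<^sub>R (T ** A ** transpose T + T ** B ** transpose T)"
proof -
  have mid: "((1/2) *\<^sub>R (A + B)) *v y = (1/2) *\<^sub>R (A *v y + B *v y)" for y
    by (simp add: scaleR_matrix_vector_assoc[symmetric] matrix_vector_mult_add_rdistrib)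
  have "(T ** ((1/2) *\<^sub>R (A + B)) ** transpose T)$i$j
      = ((1/2) *\<^sub>R (T ** A ** transpose T + T ** B ** transpose T))$i$j" for i j
    unfolding matrix_mul_transpose_nth mid by (simp add: inner_add_right matrix_mul_transpose_nth)
  thus ?thesis by (simp add: vec_eq_iff)
qed

lemma ln_det_midpoint_gt:
  fixes A B :: "real^'n^'n"
  assumes A: "pd_mat A" and B: "pd_mat B" and "A \<noteq> B"
  shows "(ln (det A) + ln (det B)) / 2 < ln (det ((1/2) *\<^sub>R (A + B)))"
proof -
  define M where "M = (1/2) *\<^sub>R (A + B)"
  obtain T :: "real^'n^'n" and m where T: "invertible T" "T ** A ** transpose T = mat 1"
    "T ** B ** transpose T = diag_mat m" and m: "\<And>i. 0 < m$i"
    using pd_mat_simultaneous_diagonalization[OF A B] by blast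
  have TM: "T ** M ** transpose T = diag_mat (\<chi> i. (1 + m$i) / 2)"
    unfolding M_def congruence_midpoint T(2,3) by (simp add: vec_eq_iff diag_mat_def mat_def)
  define t where "t = (det T)\<^sup>2"
  have "0 < t" using T(1) by (simp add: t_def invertible_det_nz)
  have ln_congr: "ln (t * det X) = ln t + ln (det X)" if "pd_mat X" for X
    using \<open>0 < t\<close> pd_mat_det_pos[OF that] by (simp add: ln_mult)
  have "ln t + ln (det A) = 0"
    using arg_cong[OF T(2), of det] ln_congr[OF A] by (simp add: det_congruence t_def)
  moreover have "ln t + ln (det B) = (\<Sum>i\<in>UNIV. ln (m$i))"
  proof -
    have "m$i \<noteq> 0" for i using m[of i] by simp
    thus ?thesis using arg_cong[OF T(3), of det] ln_congr[OF B]
      by (simp add: det_congruence det_diag_mat t_def ln_prod)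
  qed
  moreover have "ln t + ln (det M) = (\<Sum>i\<in>UNIV. ln ((1 + m$i) / 2))"
  proof -
    have "(1 + m$i) / 2 \<noteq> 0" for i using m[of i] by simp
    thus ?thesis using arg_cong[OF TM, of det] ln_congr[OF pd_mat_midpoint[OF A B]]
      by (simp add: det_congruence det_diag_mat t_def ln_prod M_def)
  qed
  moreover have "\<exists>i. m$i \<noteq> 1"
  proof (rule ccontr)
    assume "\<not> ?thesis"
    hence "T ** B ** transpose T = T ** A ** transpose T"
      unfolding T(2,3) by (simp add: vec_eq_iff diag_mat_def mat_def)
    with congruence_cancel[OF T(1)] \<open>A \<noteq> B\<close> show False by metis
  qed
  hence "(\<Sum>i\<in>UNIV. ln (m$i) / 2) < (\<Sum>i\<in>UNIV. ln ((1 + m$i) / 2))"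
    using m ln_le_ln_midpoint ln_lt_ln_midpoint by (intro sum_strict_mono_ex1) auto
  ultimately show ?thesis unfolding M_def by (simp add: sum_divide_distrib[symmetric])
qed

section \<open>Penalised log-determinant minimisation\<close>

definition offdiag_penalty :: "('n \<Rightarrow> 'n \<Rightarrow> real \<Rightarrow> real) \<Rightarrow> real^'n^'n \<Rightarrow> real" where
  "offdiag_penalty p K = (\<Sum>i\<in>UNIV. \<Sum>j\<in>UNIV - {i}. p i j (K$i$j))"

definition penalized_obj :: "real^'n^'n \<Rightarrow> ('n \<Rightarrow> 'n \<Rightarrow> real \<Rightarrow> real) \<Rightarrow> real^'n^'n \<Rightarrow> real" where
  "penalized_obj S p K = - ln (det K) + trace (S ** K) + offdiag_penalty p K"

definition offdiag_in :: "('n \<Rightarrow> 'n \<Rightarrow> real set) \<Rightarrow> real^'n^'n \<Rightarrow> bool" where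
  "offdiag_in F K \<longleftrightarrow> (\<forall>i j. i \<noteq> j \<longrightarrow> K$i$j \<in> F i j)"

lemma trace_mult_split_diag:
  fixes S K :: "real^'n^'n"
  assumes "sym_mat K"
  shows "trace (S ** K) = (\<Sum>i\<in>UNIV. S$i$i * K$i$i) + (\<Sum>i\<in>UNIV. \<Sum>j\<in>UNIV - {i}. S$i$j * K$i$j)"
proof -
  have "(\<Sum>j\<in>UNIV. S$i$j * K$j$i) = S$i$i * K$i$i + (\<Sum>j\<in>UNIV - {i}. S$i$j * K$i$j)" for i
    using assms unfolding sym_mat_iff_nth by (subst sum.remove[of _ i]) auto
  thus ?thesis by (simp add: trace_def matrix_matrix_mult_def sum.distrib)
qed

lemma trace_mult_psd_lower_bound:
  fixes S K :: "real^'n^'n"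
  assumes S: "psd_mat S" and K: "psd_mat K" and e: "0 \<le> e" "e \<le> 1" "\<And>i. e \<le> S$i$i"
  shows "e * e * trace K \<le> trace (S ** K) + e * (\<Sum>i\<in>UNIV. \<Sum>j\<in>UNIV - {i}. \<bar>S$i$j\<bar> * \<bar>K$i$j\<bar>)"
proof -
  define diag where "diag = (\<Sum>i\<in>UNIV. S$i$i * K$i$i)"
  define off where "off = (\<Sum>i\<in>UNIV. \<Sum>j\<in>UNIV - {i}. S$i$j * K$i$j)"
  have split: "trace (S ** K) = diag + off"
    using K unfolding psd_mat_def diag_def off_def by (simp add: trace_mult_split_diag)
  have "e * trace K \<le> diag"
    unfolding trace_def diag_def sum_distrib_left
    using e(3) psd_mat_diag_nonneg[OF K] by (intro sum_mono mult_right_mono) auto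
  hence "e * e * trace K \<le> e * diag" using e(1) by (simp add: mult_left_mono mult.assoc)
  also have "\<dots> = e * trace (S ** K) + e * (- off)" by (simp add: split algebra_simps)
  also have "\<dots> \<le> trace (S ** K) + e * (\<Sum>i\<in>UNIV. \<Sum>j\<in>UNIV - {i}. \<bar>S$i$j\<bar> * \<bar>K$i$j\<bar>)"
  proof (intro add_mono mult_left_mono e(1))
    show "e * trace (S ** K) \<le> trace (S ** K)"
      using trace_mult_psd_nonneg[OF S K] e(1,2) by (rule mult_left_le_one_le)
    show "- off \<le> (\<Sum>i\<in>UNIV. \<Sum>j\<in>UNIV - {i}. \<bar>S$i$j\<bar> * \<bar>K$i$j\<bar>)"
      unfolding off_def sum_negf[symmetric] by (intro sum_mono) (metis abs_ge_minus_self abs_mult)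
  qed
  finally show ?thesis .
qed

lemma offdiag_penalty_coercive:
  fixes S :: "real^'n^'n"
  assumes S: "psd_mat S" "\<And>i. 0 < S$i$i"
    and c: "\<And>i j. i \<noteq> j \<Longrightarrow> 0 < c i j"
    and p_ge: "\<And>i j x. i \<noteq> j \<Longrightarrow> x \<in> F i j \<Longrightarrow> c i j * \<bar>x\<bar> \<le> p i j x"
  obtains l where "0 < l"
    "\<And>K. psd_mat K \<Longrightarrow> offdiag_in F K \<Longrightarrow> l * trace K \<le> trace (S ** K) + offdiag_penalty p K"
proof -
  have small: "\<forall>\<^sub>F e in at_right 0. e < b" if "0 < b" for b :: real
    using order_tendstoD(2)[OF tendsto_ident_at that] .
  have ev_ij: "\<forall>\<^sub>F e in at_right 0. e * \<bar>S$i$j\<bar> < c i j" if "i \<noteq> j" for i j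
  proof (rule order_tendstoD(2)[OF _ c[OF that]])
    show "((\<lambda>e. e * \<bar>S$i$j\<bar>) \<longlongrightarrow> 0) (at_right 0)"
      by (rule tendsto_mult_left_zero) (rule tendsto_ident_at)
  qed
  have ev_c: "\<forall>\<^sub>F e in at_right 0. \<forall>i j. i \<noteq> j \<longrightarrow> e * \<bar>S$i$j\<bar> < c i j"
  proof (intro eventually_all_finite)
    fix i j
    show "\<forall>\<^sub>F e in at_right 0. i \<noteq> j \<longrightarrow> e * \<bar>S$i$j\<bar> < c i j"
      using ev_ij[of i j] by (cases "i = j") simp_all
  qed
  have ev_S: "\<forall>\<^sub>F e in at_right 0. \<forall>i. e < S$i$i"
    using S(2) by (intro eventually_all_finite small)
  have "\<forall>\<^sub>F e in at_right (0::real). 0 < e \<and> e < 1 \<and> (\<forall>i. e < S$i$i)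
      \<and> (\<forall>i j. i \<noteq> j \<longrightarrow> e * \<bar>S$i$j\<bar> < c i j)"
    by (intro eventually_conj eventually_at_right_less small ev_S ev_c) simp
  then obtain e where e: "0 < e" "e < 1" "\<forall>i. e < S$i$i" "\<forall>i j. i \<noteq> j \<longrightarrow> e * \<bar>S$i$j\<bar> < c i j"
    by (auto dest: eventually_happens'[OF trivial_limit_at_right_real])
  show ?thesis
  proof (rule that[of "e * e"])
    show "0 < e * e" using e(1) by simp
    fix K :: "real^'n^'n" assume K: "psd_mat K" "offdiag_in F K"
    have "e * (\<Sum>i\<in>UNIV. \<Sum>j\<in>UNIV - {i}. \<bar>S$i$j\<bar> * \<bar>K$i$j\<bar>) \<le> offdiag_penalty p K"
      unfolding offdiag_penalty_def sum_distrib_left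
    proof (intro sum_mono)
      fix i j :: 'n assume "j \<in> UNIV - {i}"
      hence "i \<noteq> j" by auto
      have "e * (\<bar>S$i$j\<bar> * \<bar>K$i$j\<bar>) \<le> c i j * \<bar>K$i$j\<bar>"
        using e(4) \<open>i \<noteq> j\<close> by (simp add: mult.assoc[symmetric] mult_right_mono less_imp_le)
      also have "\<dots> \<le> p i j (K$i$j)" using p_ge \<open>i \<noteq> j\<close> K(2) unfolding offdiag_in_def by blast
      finally show "e * (\<bar>S$i$j\<bar> * \<bar>K$i$j\<bar>) \<le> p i j (K$i$j)" .
    qed
    thus "e * e * trace K \<le> trace (S ** K) + offdiag_penalty p K"
      using trace_mult_psd_lower_bound[OF S(1) K(1), of e] e(1-3) by (simp add: less_imp_le)
  qed
qed

lemma penalized_obj_sublevel_bounds: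
  fixes S K :: "real^'n^'n"
  assumes l: "0 < l" and coercive: "l * trace K \<le> trace (S ** K) + offdiag_penalty p K"
    and K: "pd_mat K" and le_C: "penalized_obj S p K \<le> C"
  shows "trace K \<le> 2 * (C - real CARD('n) * (1 + ln (l / 2))) / l" and "exp (- C) \<le> det K"
proof -
  have obj: "- ln (det K) + l * trace K \<le> C"
    using coercive le_C unfolding penalized_obj_def by linarith
  have "real CARD('n) * (1 + ln (l / 2)) \<le> - ln (det K) + (l / 2) * trace K"
    using l by (intro neg_ln_det_add_trace_ge K) simp
  with obj have "(l / 2) * trace K \<le> C - real CARD('n) * (1 + ln (l / 2))" by linarith
  thus "trace K \<le> 2 * (C - real CARD('n) * (1 + ln (l / 2))) / l"
    using l by (simp add: field_simps)
  have "0 \<le> l * trace K" using l psd_mat_trace_nonneg[OF pd_imp_psd_mat[OF K]] by simp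
  with obj have "- C \<le> ln (det K)" by linarith
  thus "exp (- C) \<le> det K" using pd_mat_det_pos[OF K] by (metis exp_le_cancel_iff exp_ln)
qed

lemma norm_matrix_le_sum_abs: "norm (K :: real^'n^'n) \<le> (\<Sum>i\<in>UNIV. \<Sum>j\<in>UNIV. \<bar>K$i$j\<bar>)"
proof -
  have "norm K \<le> (\<Sum>i\<in>UNIV. norm (K$i))"
    unfolding norm_vec_def by (rule L2_set_le_sum) simp
  also have "\<dots> \<le> (\<Sum>i\<in>UNIV. \<Sum>j\<in>UNIV. \<bar>K$i$j\<bar>)"
    by (intro sum_mono norm_le_l1_cart)
  finally show ?thesis .
qed

lemma closed_offdiag_in:
  assumes "\<And>i j. i \<noteq> j \<Longrightarrow> closed (F i j)"
  shows "closed {K::real^'n^'n. offdiag_in F K}"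
  unfolding offdiag_in_def
proof (intro closed_Collect_all)
  fix i j :: 'n
  show "closed {K::real^'n^'n. i \<noteq> j \<longrightarrow> K$i$j \<in> F i j}"
  proof (cases "i = j")
    case False
    have "{K::real^'n^'n. i \<noteq> j \<longrightarrow> K$i$j \<in> F i j} = (\<lambda>K. K$i) -` ((\<lambda>x. x$j) -` F i j)"
      using False by auto
    thus ?thesis using assms[OF False] by (simp add: closed_vimage_vec_nth)
  qed simp
qed

lemma continuous_on_det: "continuous_on S (det :: real^'n^'n \<Rightarrow> real)"
  unfolding det_def by (intro continuous_intros)

lemma compact_psd_trace_det_bounded:
  assumes "\<And>i j. i \<noteq> j \<Longrightarrow> closed (F i j)"
  shows "compact {K::real^'n^'n. psd_mat K \<and> offdiag_in F K \<and> trace K \<le> B \<and> \<delta> \<le> det K}"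
    (is "compact ?C")
proof (rule compact_eq_bounded_closed[THEN iffD2], rule conjI)
  show "bounded ?C"
    unfolding bounded_iff
  proof (intro exI ballI)
    fix K assume "K \<in> ?C"
    hence "\<bar>K$i$j\<bar> \<le> B" for i j using psd_mat_abs_nth_le_trace[of K i j] by auto
    hence "(\<Sum>i\<in>UNIV. \<Sum>j\<in>UNIV. \<bar>K$i$j\<bar>) \<le> (\<Sum>i\<in>(UNIV::'n set). \<Sum>j\<in>(UNIV::'n set). B)"
      by (intro sum_mono)
    thus "norm K \<le> real CARD('n) * (real CARD('n) * B)"
      using norm_matrix_le_sum_abs[of K] by simp
  qed
  have "?C = {K. psd_mat K} \<inter> {K. offdiag_in F K} \<inter> {K. trace K \<le> B} \<inter> {K. \<delta> \<le> det K}"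
    by auto
  also have "closed \<dots>"
    unfolding trace_def
    by (intro closed_Int closed_psd_mat closed_offdiag_in assms closed_Collect_le
        continuous_intros continuous_on_det)
  finally show "closed ?C" .
qed

lemma penalized_obj_has_minimizer:
  fixes S :: "real^'n^'n"
  assumes F_closed: "\<And>i j. i \<noteq> j \<Longrightarrow> closed (F i j)" and F_0: "\<And>i j. i \<noteq> j \<Longrightarrow> 0 \<in> F i j"
    and p_cont: "\<And>i j. i \<noteq> j \<Longrightarrow> continuous_on UNIV (p i j)"
    and l: "0 < l"
    and coercive: "\<And>K. psd_mat K \<Longrightarrow> offdiag_in F K \<Longrightarrow> l * trace K \<le> trace (S ** K) + offdiag_penalty p K"
  obtains K where "pd_mat K" "offdiag_in F K"
    "\<And>K'. pd_mat K' \<Longrightarrow> offdiag_in F K' \<Longrightarrow> penalized_obj S p K \<le> penalized_obj S p K'"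
proof -
  define C0 where "C0 = penalized_obj S p (mat 1)"
  define B where "B = 2 * (C0 - real CARD('n) * (1 + ln (l / 2))) / l"
  define C where "C = {K. psd_mat K \<and> offdiag_in F K \<and> trace K \<le> B \<and> exp (- C0) \<le> det K}"
  have sublevel_C: "K \<in> C" if "pd_mat K" "offdiag_in F K" "penalized_obj S p K \<le> C0" for K
    using penalized_obj_sublevel_bounds[OF l coercive[OF pd_imp_psd_mat] that(1,3)] that(1,2)
    unfolding C_def B_def by (simp add: pd_imp_psd_mat)
  have C_pd: "pd_mat K" if "K \<in> C" for K
    using that exp_gt_zero[of "- C0"] unfolding C_def
    by (auto intro: psd_mat_det_nonzero_imp_pd)
  have one_C: "mat 1 \<in> C"
    using F_0 by (intro sublevel_C pd_mat_mat_1) (auto simp: offdiag_in_def mat_def C0_def)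
  have cont: "continuous_on C (penalized_obj S p)"
    unfolding penalized_obj_def[abs_def] offdiag_penalty_def trace_def matrix_matrix_mult_def
  proof (intro continuous_intros continuous_on_det ballI)
    fix K assume "K \<in> C"
    thus "det K \<noteq> 0" using C_pd pd_mat_det_pos by fastforce
  next
    fix i j :: 'n assume "j \<in> UNIV - {i}"
    hence "continuous_on UNIV (p i j)" using p_cont[of i j] by simp
    moreover have "continuous_on C (\<lambda>K::real^'n^'n. K$i$j)" by (intro continuous_intros)
    ultimately show "continuous_on C (\<lambda>K. p i j (K$i$j))"
      by (rule continuous_on_compose2) simp
  qed
  moreover have "compact C"
    unfolding C_def by (rule compact_psd_trace_det_bounded) (rule F_closed)
  moreover have "C \<noteq> {}" using one_C by blast
  ultimately obtain K0 where "K0 \<in> C" and K0_min: "\<And>K. K \<in> C \<Longrightarrow> penalized_obj S p K0 \<le> penalized_obj S p K"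
    using continuous_attains_inf by metis
  show ?thesis
  proof (rule that)
    show "pd_mat K0" "offdiag_in F K0" using \<open>K0 \<in> C\<close> C_pd unfolding C_def by auto
    fix K assume "pd_mat K" "offdiag_in F K"
    moreover have "penalized_obj S p K0 \<le> C0" using K0_min[OF one_C] unfolding C0_def .
    ultimately show "penalized_obj S p K0 \<le> penalized_obj S p K"
      using K0_min sublevel_C by force
  qed
qed

lemma offdiag_in_midpoint:
  fixes K1 K2 :: "real^'n^'n"
  assumes "\<And>i j. i \<noteq> j \<Longrightarrow> convex (F i j)" "offdiag_in F K1" "offdiag_in F K2"
  shows "offdiag_in F ((1/2) *\<^sub>R (K1 + K2))"
  unfolding offdiag_in_def
proof (intro allI impI)
  fix i j :: 'n assume "i \<noteq> j"
  hence "K1$i$j \<in> F i j" "K2$i$j \<in> F i j" using assms(2,3) unfolding offdiag_in_def by auto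
  from convexD[OF assms(1)[OF \<open>i \<noteq> j\<close>] this, of "1/2" "1/2"]
  show "((1/2) *\<^sub>R (K1 + K2))$i$j \<in> F i j" by (simp add: algebra_simps)
qed

lemma offdiag_penalty_midpoint_le:
  fixes K1 K2 :: "real^'n^'n"
  assumes "\<And>i j. i \<noteq> j \<Longrightarrow> convex_on (F i j) (p i j)" "offdiag_in F K1" "offdiag_in F K2"
  shows "offdiag_penalty p ((1/2) *\<^sub>R (K1 + K2)) \<le> (offdiag_penalty p K1 + offdiag_penalty p K2) / 2"
proof -
  have "offdiag_penalty p ((1/2) *\<^sub>R (K1 + K2))
      \<le> (\<Sum>i\<in>UNIV. \<Sum>j\<in>UNIV - {i}. (p i j (K1$i$j) + p i j (K2$i$j)) / 2)"
    unfolding offdiag_penalty_def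
  proof (intro sum_mono)
    fix i j :: 'n assume "j \<in> UNIV - {i}"
    hence "i \<noteq> j" by auto
    hence "K1$i$j \<in> F i j" "K2$i$j \<in> F i j" using assms(2,3) unfolding offdiag_in_def by auto
    from convex_onD[OF assms(1)[OF \<open>i \<noteq> j\<close>] _ _ this, of "1/2"]
    show "p i j (((1/2) *\<^sub>R (K1 + K2))$i$j) \<le> (p i j (K1$i$j) + p i j (K2$i$j)) / 2"
      by (simp add: algebra_simps add_divide_distrib)
  qed
  also have "\<dots> = (offdiag_penalty p K1 + offdiag_penalty p K2) / 2"
    unfolding offdiag_penalty_def by (simp add: sum_divide_distrib[symmetric] sum.distrib)
  finally show ?thesis .
qed

lemma trace_mult_midpoint:
  fixes S K1 K2 :: "real^'n^'n"
  shows "trace (S ** ((1/2) *\<^sub>R (K1 + K2))) = (trace (S ** K1) + trace (S ** K2)) / 2"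
proof -
  have "S ** ((1/2) *\<^sub>R (K1 + K2)) = (1/2) *\<^sub>R (S ** K1 + S ** K2)"
    by (simp add: matrix_scalar_ac matrix_add_ldistrib scaleR_add_right flip: scalar_matrix_assoc)
  thus ?thesis by (simp add: trace_def sum.distrib sum_divide_distrib[symmetric])
qed

lemma penalized_obj_midpoint_lt:
  fixes S K1 K2 :: "real^'n^'n"
  assumes "\<And>i j. i \<noteq> j \<Longrightarrow> convex_on (F i j) (p i j)"
    and "pd_mat K1" "pd_mat K2" "offdiag_in F K1" "offdiag_in F K2" "K1 \<noteq> K2"
  shows "penalized_obj S p ((1/2) *\<^sub>R (K1 + K2)) < (penalized_obj S p K1 + penalized_obj S p K2) / 2"
proof -
  have "offdiag_penalty p ((1/2) *\<^sub>R (K1 + K2)) \<le> (offdiag_penalty p K1 + offdiag_penalty p K2) / 2"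
    using assms(1,4,5) by (rule offdiag_penalty_midpoint_le)
  thus ?thesis
    using ln_det_midpoint_gt[OF assms(2,3,6)] unfolding penalized_obj_def trace_mult_midpoint
    by (simp add: field_simps)
qed

theorem penalized_obj_ex1_minimizer:
  fixes S :: "real^'n^'n"
  assumes S: "psd_mat S" "\<And>i. 0 < S$i$i"
    and F_closed: "\<And>i j. i \<noteq> j \<Longrightarrow> closed (F i j)" and F_0: "\<And>i j. i \<noteq> j \<Longrightarrow> 0 \<in> F i j"
    and p_convex: "\<And>i j. i \<noteq> j \<Longrightarrow> convex_on (F i j) (p i j)"
    and p_cont: "\<And>i j. i \<noteq> j \<Longrightarrow> continuous_on UNIV (p i j)"
    and c: "\<And>i j. i \<noteq> j \<Longrightarrow> 0 < c i j"
    and p_ge: "\<And>i j x. i \<noteq> j \<Longrightarrow> x \<in> F i j \<Longrightarrow> c i j * \<bar>x\<bar> \<le> p i j x"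
  shows "\<exists>!K. pd_mat K \<and> offdiag_in F K
           \<and> (\<forall>K'. pd_mat K' \<and> offdiag_in F K' \<longrightarrow> penalized_obj S p K \<le> penalized_obj S p K')"
proof (rule ex_ex1I)
  obtain l where "0 < l"
    "\<And>K. psd_mat K \<Longrightarrow> offdiag_in F K \<Longrightarrow> l * trace K \<le> trace (S ** K) + offdiag_penalty p K"
    using offdiag_penalty_coercive[where F = F and p = p and c = c, OF S c p_ge] by blast
  then obtain K where "pd_mat K" "offdiag_in F K"
    "\<And>K'. pd_mat K' \<Longrightarrow> offdiag_in F K' \<Longrightarrow> penalized_obj S p K \<le> penalized_obj S p K'"
    using penalized_obj_has_minimizer[where F = F and p = p, OF F_closed F_0 p_cont] by blast
  thus "\<exists>K. pd_mat K \<and> offdiag_in F K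
          \<and> (\<forall>K'. pd_mat K' \<and> offdiag_in F K' \<longrightarrow> penalized_obj S p K \<le> penalized_obj S p K')"
    by blast
next
  fix K1 K2
  assume K1: "pd_mat K1 \<and> offdiag_in F K1
      \<and> (\<forall>K'. pd_mat K' \<and> offdiag_in F K' \<longrightarrow> penalized_obj S p K1 \<le> penalized_obj S p K')"
    and K2: "pd_mat K2 \<and> offdiag_in F K2
      \<and> (\<forall>K'. pd_mat K' \<and> offdiag_in F K' \<longrightarrow> penalized_obj S p K2 \<le> penalized_obj S p K')"
  show "K1 = K2"
  proof (rule ccontr)
    assume "K1 \<noteq> K2"
    let ?M = "(1/2) *\<^sub>R (K1 + K2)"
    have "pd_mat ?M" using K1 K2 pd_mat_midpoint by blast
    moreover have "offdiag_in F ?M"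
      using K1 K2 p_convex by (intro offdiag_in_midpoint convex_on_imp_convex) auto
    ultimately have "penalized_obj S p K1 \<le> penalized_obj S p ?M" using K1 by blast
    moreover have "penalized_obj S p K1 = penalized_obj S p K2" using K1 K2 by (meson order_antisym)
    moreover have "penalized_obj S p ?M < (penalized_obj S p K1 + penalized_obj S p K2) / 2"
      by (rule penalized_obj_midpoint_lt[where F = F]) (use p_convex K1 K2 \<open>K1 \<noteq> K2\<close> in auto)
    ultimately show False by argo
  qed
qed

section \<open>Box penalties and the graphical lasso\<close>

lemma convex_on_max:
  fixes f g :: "'a::real_vector \<Rightarrow> real"
  assumes "convex_on S f" "convex_on S g"
  shows "convex_on S (\<lambda>x. max (f x) (g x))"
proof (rule convex_onI)
  fix t :: real and x y assume t: "0 < t" "t < 1" and xy: "x \<in> S" "y \<in> S"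
  let ?z = "(1 - t) *\<^sub>R x + t *\<^sub>R y" and ?m = "(1 - t) * max (f x) (g x) + t * max (f y) (g y)"
  have "f ?z \<le> (1 - t) * f x + t * f y" "g ?z \<le> (1 - t) * g x + t * g y"
    using convex_onD[OF assms(1)] convex_onD[OF assms(2)] t xy by simp_all
  moreover have "(1 - t) * f x + t * f y \<le> ?m" "(1 - t) * g x + t * g y \<le> ?m"
    using t by (intro add_mono mult_left_mono; simp)+
  ultimately show "max (f ?z) (g ?z) \<le> ?m" by simp
qed (use assms convex_on_imp_convex in blast)

lemma convex_on_linear_real: "convex S \<Longrightarrow> convex_on S (\<lambda>x::real. a * x)"
  by (rule convex_onI) (simp_all add: algebra_simps)

lemma ex1_minimizer_ereal_extension:
  fixes f :: "'a \<Rightarrow> ereal" and g :: "'a \<Rightarrow> real"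
  assumes finite: "\<And>x. P x \<Longrightarrow> A x \<Longrightarrow> f x = ereal (g x)"
    and infinite: "\<And>x. P x \<Longrightarrow> \<not> A x \<Longrightarrow> f x = \<infinity>"
    and ex1: "\<exists>!x. P x \<and> A x \<and> (\<forall>y. P y \<and> A y \<longrightarrow> g x \<le> g y)"
  shows "\<exists>!x. P x \<and> (\<forall>y. P y \<longrightarrow> f x \<le> f y)"
proof -
  have "(\<forall>y. P y \<longrightarrow> f x \<le> f y) \<longleftrightarrow> A x \<and> (\<forall>y. P y \<and> A y \<longrightarrow> g x \<le> g y)"
    if Px: "P x" and feasible: "\<exists>z. P z \<and> A z" for x
  proof
    assume min: "\<forall>y. P y \<longrightarrow> f x \<le> f y"
    obtain z where "P z" "A z" using feasible by blast
    hence "f x \<noteq> \<infinity>" using min finite[of z] by (metis PInfty_neq_ereal(1) ereal_infty_less_eq(1))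
    hence "A x" using infinite Px by blast
    thus "A x \<and> (\<forall>y. P y \<and> A y \<longrightarrow> g x \<le> g y)" using min finite Px by fastforce
  next
    assume "A x \<and> (\<forall>y. P y \<and> A y \<longrightarrow> g x \<le> g y)"
    thus "\<forall>y. P y \<longrightarrow> f x \<le> f y" using finite infinite Px by (metis ereal_less_eq(1,3))
  qed
  moreover have "\<exists>z. P z \<and> A z" using ex1 by blast
  ultimately show ?thesis using ex1 by (metis (no_types, lifting))
qed

\<comment> \<open>\<open>box_dom l u\<close> is where \<open>max (l * x) (u * x)\<close> is finite: an infinite bound excludes one sign
  of \<open>x\<close>, and \<open>real_of_ereal\<close> turns it into the harmless coefficient \<open>0\<close> of \<open>box_pen\<close>\<close>
definition box_dom :: "ereal \<Rightarrow> ereal \<Rightarrow> real set" where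
  "box_dom l u = (if l = -\<infinity> then {0..} else UNIV) \<inter> (if u = \<infinity> then {..0} else UNIV)"

definition box_pen :: "ereal \<Rightarrow> ereal \<Rightarrow> real \<Rightarrow> real" where
  "box_pen l u x = max (real_of_ereal l * x) (real_of_ereal u * x)"

definition box_slope :: "ereal \<Rightarrow> ereal \<Rightarrow> real" where
  "box_slope l u = min (if l = -\<infinity> then 1 else - real_of_ereal l) (if u = \<infinity> then 1 else real_of_ereal u)"

lemma max_ereal_mult_eq_box_pen:
  fixes l u :: ereal
  assumes "l < 0" "0 < u"
  shows "max (l * ereal x) (u * ereal x) = (if x \<in> box_dom l u then ereal (box_pen l u x) else \<infinity>)"
proof -
  have "l = -\<infinity> \<or> (\<exists>a. l = ereal a \<and> a < 0)" using assms(1) by (cases l) auto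
  moreover have "u = \<infinity> \<or> (\<exists>b. u = ereal b \<and> 0 < b)" using assms(2) by (cases u) auto
  moreover have "x < 0 \<or> x = 0 \<or> 0 < x" by linarith
  ultimately show ?thesis
    by (auto simp: box_dom_def box_pen_def max_def zero_le_mult_iff mult_le_0_iff)
qed

lemma closed_box_dom: "closed (box_dom l u)"
  by (simp add: box_dom_def closed_Int)

lemma zero_in_box_dom: "0 \<in> box_dom l u"
  by (simp add: box_dom_def)

lemma convex_on_box_pen: "convex_on (box_dom l u) (box_pen l u)"
proof -
  have "convex (box_dom l u)" by (simp add: box_dom_def convex_Int)
  thus ?thesis unfolding box_pen_def by (intro convex_on_max convex_on_linear_real)
qed

lemma continuous_on_box_pen: "continuous_on S (box_pen l u)"
  unfolding box_pen_def by (intro continuous_intros)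

lemma box_slope_pos: "l < 0 \<Longrightarrow> 0 < u \<Longrightarrow> 0 < box_slope l u"
  by (cases l; cases u) (auto simp: box_slope_def)

lemma box_slope_le_box_pen:
  assumes "x \<in> box_dom l u"
  shows "box_slope l u * \<bar>x\<bar> \<le> box_pen l u x"
proof (cases "0 \<le> x")
  case True
  with assms have "u = \<infinity> \<Longrightarrow> x = 0" by (auto simp: box_dom_def)
  hence "box_slope l u * x \<le> real_of_ereal u * x"
    using True unfolding box_slope_def by (auto intro: mult_right_mono)
  thus ?thesis using True by (simp add: box_pen_def)
next
  case False
  with assms have "l \<noteq> -\<infinity>" by (auto simp: box_dom_def)
  hence "box_slope l u * (- x) \<le> (- real_of_ereal l) * (- x)"
    using False unfolding box_slope_def by (intro mult_right_mono) auto
  thus ?thesis using False by (simp add: box_pen_def)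
qed

lemma box_obj_ex1_minimizer:
  fixes S :: "real^'n^'n" and L U :: "ereal^'n^'n"
  assumes S: "psd_mat S" "\<And>i. 0 < S$i$i"
    and LU: "\<And>i j. i \<noteq> j \<Longrightarrow> L$i$j < 0 \<and> 0 < U$i$j"
  shows "\<exists>!K. pd_mat K \<and> (\<forall>K'. pd_mat K' \<longrightarrow> box_obj S L U K \<le> box_obj S L U K')"
proof -
  define F where "F i j = box_dom (L$i$j) (U$i$j)" for i j
  define p where "p i j = box_pen (L$i$j) (U$i$j)" for i j
  have box_term: "max (L$i$j * ereal x) (U$i$j * ereal x) = (if x \<in> F i j then ereal (p i j x) else \<infinity>)"
    if "i \<noteq> j" for i j x
    using max_ereal_mult_eq_box_pen LU[OF that] by (simp add: F_def p_def)
  have "\<exists>!K. pd_mat K \<and> offdiag_in F K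
      \<and> (\<forall>K'. pd_mat K' \<and> offdiag_in F K' \<longrightarrow> penalized_obj S p K \<le> penalized_obj S p K')"
    by (rule penalized_obj_ex1_minimizer[where c = "\<lambda>i j. box_slope (L$i$j) (U$i$j)", OF S])
      (use LU in \<open>simp_all add: F_def p_def closed_box_dom zero_in_box_dom convex_on_box_pen
          continuous_on_box_pen box_slope_pos box_slope_le_box_pen\<close>)
  moreover have "box_obj S L U K = ereal (penalized_obj S p K)" if "offdiag_in F K" for K
  proof -
    have "(\<Sum>i\<in>UNIV. \<Sum>j\<in>UNIV - {i}. max (L$i$j * ereal (K$i$j)) (U$i$j * ereal (K$i$j)))
        = (\<Sum>i\<in>UNIV. \<Sum>j\<in>UNIV - {i}. ereal (p i j (K$i$j)))"
      using that box_term unfolding offdiag_in_def by (intro sum.cong refl) auto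
    thus ?thesis by (simp add: box_obj_def penalized_obj_def offdiag_penalty_def)
  qed
  moreover have "box_obj S L U K = \<infinity>" if infeasible: "\<not> offdiag_in F K" for K
  proof -
    obtain i j where "i \<noteq> j" "K$i$j \<notin> F i j" using infeasible unfolding offdiag_in_def by auto
    hence "max (L$i$j * ereal (K$i$j)) (U$i$j * ereal (K$i$j)) = \<infinity>" using box_term by simp
    hence "(\<Sum>j\<in>UNIV - {i}. max (L$i$j * ereal (K$i$j)) (U$i$j * ereal (K$i$j))) = \<infinity>"
      using \<open>i \<noteq> j\<close> by (subst sum_Pinfty) auto
    hence "(\<Sum>i\<in>UNIV. \<Sum>j\<in>UNIV - {i}. max (L$i$j * ereal (K$i$j)) (U$i$j * ereal (K$i$j))) = \<infinity>"
      by (subst sum_Pinfty) auto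
    thus ?thesis by (simp add: box_obj_def)
  qed
  ultimately show ?thesis by (intro ex1_minimizer_ereal_extension)
qed

lemma box_obj_eq_glasso_obj:
  fixes S K :: "real^'n^'n"
  assumes "0 \<le> \<rho>"
  shows "box_obj S (\<chi> i j. ereal (- \<rho>)) (\<chi> i j. ereal \<rho>) K = ereal (glasso_obj S \<rho> K)"
proof -
  have "max (- (\<rho> * x)) (\<rho> * x) = \<rho> * \<bar>x\<bar>" for x
    using assms by (auto simp: abs_if max_def zero_le_mult_iff)
  hence "max (ereal (- \<rho>) * ereal x) (ereal \<rho> * ereal x) = ereal (\<rho> * \<bar>x\<bar>)" for x
    by (metis ereal_max minus_mult_left times_ereal.simps(1))
  thus ?thesis by (simp add: box_obj_def glasso_obj_def sum_distrib_left)
qed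

lemma glasso_obj_ex1_minimizer:
  fixes S :: "real^'n^'n"
  assumes "psd_mat S" "\<And>i. 0 < S$i$i" "0 < \<rho>"
  shows "\<exists>!K. pd_mat K \<and> (\<forall>K'. pd_mat K' \<longrightarrow> glasso_obj S \<rho> K \<le> glasso_obj S \<rho> K')"
  using box_obj_ex1_minimizer[of S "\<chi> i j. ereal (- \<rho>)" "\<chi> i j. ereal \<rho>"] assms
  by (simp add: box_obj_eq_glasso_obj)

theorem theorem8p7:
  fixes S :: "real^'n^'n"
  assumes "psd_mat S" and "\<forall>i. S $ i $ i > 0"
  shows "(\<forall>\<rho>::real. \<rho> > 0 \<longrightarrow>
           (\<exists>!K. pd_mat K \<and> (\<forall>K'. pd_mat K' \<longrightarrow> glasso_obj S \<rho> K \<le> glasso_obj S \<rho> K')))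
       \<and> (\<forall>L U :: ereal^'n^'n.
           sym_mat L \<and> sym_mat U \<and> (\<forall>i. L $ i $ i = 0 \<and> U $ i $ i = 0)
           \<and> (\<forall>i j. i \<noteq> j \<longrightarrow> L $ i $ j < 0 \<and> 0 < U $ i $ j) \<longrightarrow>
           (\<exists>!K. pd_mat K \<and> (\<forall>K'. pd_mat K' \<longrightarrow> box_obj S L U K \<le> box_obj S L U K')))"
  using glasso_obj_ex1_minimizer[OF assms(1)] box_obj_ex1_minimizer[OF assms(1)] assms(2)
  by simp

end
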